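(* If $ck+cj+1 \ge n \ge c+1$, then $g(j, k, n)=1$.
   Context: Let $c \ge 1$ and consider permutations in $S_n$ written in one-line notation. The order permutation (standardization) of a word $w$ with distinct letters is the unique permutation $\pi$ of the same length with $\pi_i<\pi_j$ iff $w_i<w_j$. Let $K$ be the set partition of $S_{c+1}$ with exactly two nontrivial parts, $\{ x \mid x\in S_{c+1},\ x_1=1 \}$ and $\{ x \mid x\in S_{c+1},\ x_{c+1}=1 \}$ (all other permutations of $S_{c+1}$ form singleton parts). The $K$-equivalence on $S_n$ is the equivalence relation generated by declaring $aub \equiv avb$ whenever $a,b,u,v$ are words, $u,v$ have length $c+1$, and the order permutations of $u$ and $v$ lie in the same part of $K$; i.e. one may rearrange any $c+1$ consecutive letters whose smallest letter is first so that the smallest letter stays first, and likewise for blocks whose smallest letter is last. Equivalence classes are with respect to this relation. Definition ($j,k$-squished): choose $j$ letters $l_1<l_2<\cdots<l_j$ among $1,\ldots,j+k$, and let $r_1<r_2<\cdots<r_k$ be the remaining $k$ letters among $1,\ldots,j+k$. A permutation is $j,k$-squished (for this choice) if, for each $i\le j$, $l_i$ is among the first $c(i-1)+1$ positions, and for each $i\le k$, $r_i$ is among the final $c(i-1)+1$ positions. $g(j,k,n)$ denotes the number of equivalence classes in $S_n$ (under this $K$-equivalence) containing permutations that are $j,k$-squished for a given choice of $l_1,\ldots,l_j$ and $r_1,\ldots,r_k$. *)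

theory Defs
  imports "HOL-Combinatorics.Multiset_Permutations"
begin

abbreviation Sn :: "nat \<Rightarrow> nat list set" where
  "Sn n \<equiv> permutations_of_set {1..n}"

definition std :: "nat list \<Rightarrow> nat list" where
  "std w = map (\<lambda>x. card {y \<in> set w. y < x} + 1) w"

text \<open>The two nontrivial parts of the set partition K of S_(c+1).\<close>
definition Kfirst :: "nat \<Rightarrow> nat list set" where
  "Kfirst c = {x \<in> Sn (Suc c). x ! 0 = 1}"

definition Klast :: "nat \<Rightarrow> nat list set" where
  "Klast c = {x \<in> Sn (Suc c). x ! c = 1}"

definition same_part :: "nat \<Rightarrow> nat list \<Rightarrow> nat list \<Rightarrow> bool" where
  "same_part c p q \<longleftrightarrow> p = q \<or> (p \<in> Kfirst c \<and> q \<in> Kfirst c) \<or> (p \<in> Klast c \<and> q \<in> Klast c)"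

definition Kstep :: "nat \<Rightarrow> nat list \<Rightarrow> nat list \<Rightarrow> bool" where
  "Kstep c w w' \<longleftrightarrow> (\<exists>a b u v. w = a @ u @ b \<and> w' = a @ v @ b \<and>
      length u = Suc c \<and> length v = Suc c \<and> same_part c (std u) (std v))"

definition Kequiv :: "nat \<Rightarrow> nat \<Rightarrow> nat list \<Rightarrow> nat list \<Rightarrow> bool" where
  "Kequiv c n w w' \<longleftrightarrow> w \<in> Sn n \<and> w' \<in> Sn n \<and>
     (\<lambda>x y. x \<in> Sn n \<and> y \<in> Sn n \<and> (Kstep c x y \<or> Kstep c y x))\<^sup>*\<^sup>* w w'"

definition Kclass :: "nat \<Rightarrow> nat \<Rightarrow> nat list \<Rightarrow> nat list set" where
  "Kclass c n w = {v. Kequiv c n w v}"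

text \<open>j,k-squished for the choice L = {l_1 < ... < l_j} \<subseteq> {1..j+k};
  R = {1..j+k} - L = {r_1 < ... < r_k}. Indices i are 0-based here, positions 0-based:
  l_(i+1) among the first c*i+1 positions, r_(i+1) among the last c*i+1 positions.\<close>
definition squished :: "nat \<Rightarrow> nat \<Rightarrow> nat \<Rightarrow> nat set \<Rightarrow> nat list \<Rightarrow> bool" where
  "squished c j k L w \<longleftrightarrow>
     (\<forall>i < j. \<exists>p < length w. p < c * i + 1 \<and> w ! p = sorted_list_of_set L ! i) \<and>
     (\<forall>i < k. \<exists>p < length w. length w - (c * i + 1) \<le> p \<and>
                w ! p = sorted_list_of_set ({1..j+k} - L) ! i)"

definition g :: "nat \<Rightarrow> nat \<Rightarrow> nat \<Rightarrow> nat \<Rightarrow> nat set \<Rightarrow> nat" where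
  "g c j k n L = card (Kclass c n ` {w \<in> Sn n. squished c j k L w})"

end

theory Submission
  imports Defs
begin

text \<open>We prove a stronger statement, in which the letters of L need only lie near the front with
  slack a and those of R near the back with slack b, and where, besides the K-moves, the first a and
  the last b letters may be permuted freely. By symmetry let the smallest constrained letter m lie
  in L. It sits among the first a positions, so a free transposition moves it to the front. With m
  in front, a free transposition carries m to the start q < a of a window of c + 1 letters and back,
  so all transpositions inside such a window are realised, and these overlapping windows generate
  all transpositions of positions 1, ..., a + c - 1. Deleting m therefore leaves a configuration with front slack a + c - 1, to which
  induction applies. Once no constrained letters are left, the bound n \<le> c k + c j + 1 has become
  n < a + b, so the free blocks at both ends overlap and generate all permutations.\<close>

lemma equivclp_map_on:
  assumes "equivclp r x y"
    and "\<And>y z. equivclp r x y \<Longrightarrow> equivclp r x z \<Longrightarrow> r y z \<Longrightarrow> equivclp r' (f y) (f z)"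
  shows "equivclp r' (f x) (f y)"
  using assms(1)
proof (induction rule: equivclp_induct)
  case base
  show ?case by simp
next
  case (step y z)
  then have "equivclp r x z" by (blast intro: equivclp_into_equivclp)
  with step have "equivclp r' (f y) (f z)" using assms(2) by (blast intro: equivclp_sym)
  with step.IH show ?case by (rule equivclp_trans)
qed

section \<open>Transpositions in lists\<close>

definition list_swap :: "nat \<Rightarrow> nat \<Rightarrow> 'a list \<Rightarrow> 'a list" where
  "list_swap i j xs = xs[i := xs ! j, j := xs ! i]"

lemma length_list_swap [simp]: "length (list_swap i j xs) = length xs"
  by (simp add: list_swap_def)

lemma nth_list_swap:
  "i < length xs \<Longrightarrow> j < length xs \<Longrightarrow> k < length xs \<Longrightarrow>
    list_swap i j xs ! k = (if k = j then xs ! i else if k = i then xs ! j else xs ! k)"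
  by (auto simp: list_swap_def nth_list_update)

lemma set_list_swap [simp]: "i < length xs \<Longrightarrow> j < length xs \<Longrightarrow> set (list_swap i j xs) = set xs"
  by (simp add: list_swap_def)

lemma distinct_list_swap [simp]:
  "i < length xs \<Longrightarrow> j < length xs \<Longrightarrow> distinct (list_swap i j xs) = distinct xs"
  by (simp add: list_swap_def)

lemma list_swap_self [simp]: "list_swap i i xs = xs"
  by (simp add: list_swap_def)

lemma list_swap_commute: "list_swap i j xs = list_swap j i xs"
  by (cases "i = j") (auto simp: list_swap_def list_update_swap)

lemma list_swap_Cons: "list_swap (Suc i) (Suc j) (x # xs) = x # list_swap i j xs"
  by (simp add: list_swap_def)

lemma list_swap_conjugate:
  assumes "i < length xs" "j < length xs" "k < length xs" "i \<noteq> j" "j \<noteq> k" "i \<noteq> k"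
  shows "list_swap i j (list_swap j k (list_swap i j xs)) = list_swap i k xs"
  by (rule nth_equalityI) (use assms in \<open>auto simp: nth_list_swap\<close>)

lemma list_swap_conjugate_disjoint:
  assumes "i < length xs" "j < length xs" "k < length xs" "l < length xs"
    and "{k, l} \<inter> {i, j} = {}"
  shows "list_swap i j (list_swap k l (list_swap i j xs)) = list_swap k l xs"
  by (rule nth_equalityI) (use assms in \<open>auto simp: nth_list_swap\<close>)

lemma rev_list_swap:
  assumes "i < length xs" "j < length xs"
  shows "rev (list_swap i j xs) = list_swap (length xs - 1 - i) (length xs - 1 - j) (rev xs)"
  by (rule nth_equalityI) (use assms in \<open>auto simp: nth_list_swap rev_nth\<close>)

lemma list_swap_append_middle:
  assumes "length xs \<le> i" "i < length xs + length ys" "length xs \<le> j" "j < length xs + length ys"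
  shows "list_swap i j (xs @ ys @ zs) = xs @ list_swap (i - length xs) (j - length xs) ys @ zs"
proof -
  have "i - length xs < length ys" "j - length xs < length ys" using assms by linarith+
  then show ?thesis using assms by (simp add: list_swap_def list_update_append nth_append)
qed

section \<open>Standardization and K-moves\<close>

lemma std_in_permutations:
  assumes "distinct u"
  shows "std u \<in> permutations_of_set {1..length u}"
proof -
  define r where "r x = card {y \<in> set u. y < x} + 1" for x
  have std: "std u = map r u" by (simp add: std_def r_def)
  have mono: "r x < r x'" if "x \<in> set u" "x < x'" for x x'
  proof -
    have "{y \<in> set u. y < x} \<subset> {y \<in> set u. y < x'}" using that by auto
    then show ?thesis unfolding r_def by (simp add: psubset_card_mono)
  qed
  have inj: "inj_on r (set u)"
    by (rule inj_onI) (metis linorder_neqE_nat mono less_irrefl)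
  have "r x \<in> {1..length u}" if "x \<in> set u" for x
  proof -
    have "{y \<in> set u. y < x} \<subset> set u" using that by auto
    then have "card {y \<in> set u. y < x} < card (set u)" by (simp add: psubset_card_mono)
    then show ?thesis using distinct_card[OF assms] by (simp add: r_def)
  qed
  moreover have "card (r ` set u) = length u"
    using inj distinct_card[OF assms] by (simp add: card_image)
  ultimately have "r ` set u = {1..length u}" by (intro card_subset_eq) auto
  moreover have "distinct (map r u)" using inj assms by (simp add: distinct_map)
  ultimately show ?thesis by (simp add: std permutations_of_set_def)
qed

lemma std_nth_eq_1:
  assumes "p < length u" "\<forall>i < length u. u ! p \<le> u ! i"
  shows "std u ! p = 1"
proof -
  have "{y \<in> set u. y < u ! p} = {}" using assms by (auto simp: in_set_conv_nth not_less)
  then show ?thesis using assms(1) by (simp add: std_def)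
qed

lemma same_part_std_list_swap:
  assumes u: "distinct u" "length u = Suc c" and p: "p = 0 \<or> p = c"
    and min: "\<forall>i < Suc c. i \<noteq> p \<longrightarrow> u ! p < u ! i"
    and i: "i < Suc c" "i \<noteq> p" and i': "i' < Suc c" "i' \<noteq> p"
  shows "same_part c (std u) (std (list_swap i i' u))"
proof -
  let ?u' = "list_swap i i' u"
  have u'p: "?u' ! p = u ! p" using u p i i' by (auto simp: nth_list_swap)
  have "\<forall>k < length u. u ! p \<le> u ! k" "\<forall>k < length ?u'. ?u' ! p \<le> ?u' ! k"
    using u min i i' u'p by (auto simp: nth_list_swap less_imp_le)
  then have "std u ! p = 1" "std ?u' ! p = 1"
    using u p by (metis std_nth_eq_1 length_list_swap lessI zero_less_Suc)+
  moreover have "std u \<in> Sn (Suc c)" "std ?u' \<in> Sn (Suc c)"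
    using u i i' std_in_permutations[of u] std_in_permutations[of ?u'] by auto
  ultimately show ?thesis using p by (auto simp: same_part_def Kfirst_def Klast_def)
qed

definition min_window_swap :: "nat \<Rightarrow> nat list \<Rightarrow> nat list \<Rightarrow> bool" where
  "min_window_swap c x y \<longleftrightarrow> distinct x \<and> (\<exists>q p s s'. q + c < length x \<and> (p = q \<or> p = q + c) \<and>
     (\<forall>i \<in> {q..q+c} - {p}. x ! p < x ! i) \<and> s \<in> {q..q+c} - {p} \<and> s' \<in> {q..q+c} - {p} \<and>
     y = list_swap s s' x)"

lemma Kstep_if_min_window_swap:
  assumes "min_window_swap c x y"
  shows "Kstep c x y"
proof -
  obtain q p s s' where q: "q + c < length x" and p: "p = q \<or> p = q + c"
    and min: "\<forall>i \<in> {q..q+c} - {p}. x ! p < x ! i"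
    and s: "s \<in> {q..q+c} - {p}" "s' \<in> {q..q+c} - {p}" and y: "y = list_swap s s' x"
    and d: "distinct x"
    using assms unfolding min_window_swap_def by blast
  define u where "u = take (Suc c) (drop q x)"
  have x: "x = take q x @ u @ drop (q + Suc c) x"
    unfolding u_def by (metis append_take_drop_id add.commute drop_drop)
  have lu: "length u = Suc c" and lq: "length (take q x) = q" using q by (auto simp: u_def)
  have un: "u ! i = x ! (q + i)" if "i < Suc c" for i using q that by (simp add: u_def)
  have y': "y = take q x @ list_swap (s - q) (s' - q) u @ drop (q + Suc c) x"
    using list_swap_append_middle[of "take q x" s u s' "drop (q + Suc c) x"] s lu lq x y by auto
  have "distinct u" using d by (simp add: u_def)
  moreover have "\<forall>i < Suc c. i \<noteq> p - q \<longrightarrow> u ! (p - q) < u ! i"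
    using min p un by (auto simp: Ball_def)
  ultimately have "same_part c (std u) (std (list_swap (s - q) (s' - q) u))"
    using lu p s by (intro same_part_std_list_swap) auto
  then show ?thesis unfolding Kstep_def using x y' lu by (metis length_list_swap)
qed

lemma min_window_swap_rev:
  assumes "min_window_swap c x y"
  shows "min_window_swap c (rev x) (rev y)"
proof -
  obtain q p s s' where q: "q + c < length x" and p: "p = q \<or> p = q + c"
    and min: "\<forall>i \<in> {q..q+c} - {p}. x ! p < x ! i"
    and s: "s \<in> {q..q+c} - {p}" "s' \<in> {q..q+c} - {p}" and y: "y = list_swap s s' x"
    and d: "distinct x"
    using assms unfolding min_window_swap_def by blast
  define r where "r i = length x - 1 - i" for i
  have ry: "rev y = list_swap (r s) (r s') (rev x)"
    using y s q rev_list_swap[of s x s'] by (simp add: r_def)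
  have r_mem: "r i \<in> {r (q + c)..r (q + c) + c} - {r p} \<longleftrightarrow> i \<in> {q..q+c} - {p}"
    if "i < length x" for i
    using that q p by (auto simp: r_def)
  have "\<forall>i \<in> {r (q + c)..r (q + c) + c} - {r p}. rev x ! r p < rev x ! i"
  proof
    fix i assume i: "i \<in> {r (q + c)..r (q + c) + c} - {r p}"
    then have "i < length x" "r i \<in> {q..q+c} - {p}" using q r_mem[of "r i"] by (auto simp: r_def)
    then show "rev x ! r p < rev x ! i" using min q p by (auto simp: rev_nth r_def)
  qed
  moreover have "r s \<in> {r (q + c)..r (q + c) + c} - {r p}" "r s' \<in> {r (q + c)..r (q + c) + c} - {r p}"
    using r_mem s q by auto
  moreover have "r (q + c) + c < length (rev x)" "r p = r (q + c) \<or> r p = r (q + c) + c"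
    using q p by (auto simp: r_def)
  moreover have "distinct (rev x)" using d by simp
  ultimately show ?thesis unfolding min_window_swap_def using ry by meson
qed

text \<open>These record the freedom gained once the smallest letters have been fixed at the ends; for
  a = b = 1 they are trivial.\<close>
definition Kmove :: "nat \<Rightarrow> nat \<Rightarrow> nat \<Rightarrow> nat list \<Rightarrow> nat list \<Rightarrow> bool" where
  "Kmove c a b x y \<longleftrightarrow> min_window_swap c x y \<or>
     (\<exists>s s'. s < length x \<and> s' < length x \<and> y = list_swap s s' x \<and>
        (s < a \<and> s' < a \<or> length x - b \<le> s \<and> length x - b \<le> s'))"

lemma Kmove_preserves:
  assumes "Kmove c a b x y"
  shows "set y = set x \<and> length y = length x \<and> distinct y = distinct x"
proof -
  obtain s s' where "s < length x" "s' < length x" "y = list_swap s s' x"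
  proof (cases "min_window_swap c x y")
    case True
    then obtain q p s s' where "q + c < length x" "s \<in> {q..q+c}" "s' \<in> {q..q+c}"
        "y = list_swap s s' x"
      unfolding min_window_swap_def by blast
    then show ?thesis using that[of s s'] by simp
  next
    case False
    then show ?thesis using assms that unfolding Kmove_def by blast
  qed
  then show ?thesis by simp
qed

lemma equivclp_Kmove_preserves:
  assumes "equivclp (Kmove c a b) x y"
  shows "set y = set x \<and> length y = length x \<and> distinct y = distinct x"
  using assms
proof (induction rule: equivclp_induct)
  case (step y z)
  then show ?case by (elim disjE) (auto dest: Kmove_preserves)
qed simp

lemma equivclp_Kmove_front:
  "s < a \<Longrightarrow> s' < a \<Longrightarrow> s < length x \<Longrightarrow> s' < length x \<Longrightarrow> equivclp (Kmove c a b) x (list_swap s s' x)"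
  by (rule r_into_equivclp) (auto simp: Kmove_def)

lemma equivclp_Kmove_back:
  "length x - b \<le> s \<Longrightarrow> length x - b \<le> s' \<Longrightarrow> s < length x \<Longrightarrow> s' < length x \<Longrightarrow>
    equivclp (Kmove c a b) x (list_swap s s' x)"
  by (rule r_into_equivclp) (auto simp: Kmove_def)

lemma Kmove_rev:
  assumes "Kmove c a b x y"
  shows "Kmove c b a (rev x) (rev y)"
proof -
  consider "min_window_swap c x y"
    | s s' where "s < length x" "s' < length x" "y = list_swap s s' x"
        "s < a \<and> s' < a \<or> length x - b \<le> s \<and> length x - b \<le> s'"
    using assms unfolding Kmove_def by blast
  then show ?thesis
  proof cases
    case 1
    then show ?thesis by (simp add: Kmove_def min_window_swap_rev)
  next
    case (2 s s')
    let ?r = "\<lambda>i. length x - 1 - i"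
    have "rev y = list_swap (?r s) (?r s') (rev x)"
      using 2 rev_list_swap by blast
    moreover have "?r s < length (rev x)" "?r s' < length (rev x)"
      "?r s < b \<and> ?r s' < b \<or> length (rev x) - a \<le> ?r s \<and> length (rev x) - a \<le> ?r s'"
      using 2 by auto
    ultimately show ?thesis unfolding Kmove_def by (intro disjI2) blast
  qed
qed

lemma equivclp_Kmove_rev_iff:
  "equivclp (Kmove c b a) (rev x) (rev y) \<longleftrightarrow> equivclp (Kmove c a b) x y"
proof
  show "equivclp (Kmove c a b) x y \<Longrightarrow> equivclp (Kmove c b a) (rev x) (rev y)" for a b x y
    by (erule equivclp_map_on) (simp add: Kmove_rev r_into_equivclp)
  from this[of b a "rev x" "rev y"]
  show "equivclp (Kmove c b a) (rev x) (rev y) \<Longrightarrow> equivclp (Kmove c a b) x y" by simp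
qed

lemma Kequiv_sym: "Kequiv c n x y \<Longrightarrow> Kequiv c n y x"
proof -
  let ?R = "\<lambda>x y. x \<in> Sn n \<and> y \<in> Sn n \<and> (Kstep c x y \<or> Kstep c y x)"
  have "symp ?R" by (auto intro: sympI)
  then show "Kequiv c n x y \<Longrightarrow> Kequiv c n y x"
    unfolding Kequiv_def by (blast dest: sympD[OF symp_rtranclp])
qed

lemma Kequiv_trans: "Kequiv c n x y \<Longrightarrow> Kequiv c n y z \<Longrightarrow> Kequiv c n x z"
  unfolding Kequiv_def by (meson rtranclp_trans)

lemma Kclass_eq: "Kequiv c n x y \<Longrightarrow> Kclass c n x = Kclass c n y"
  unfolding Kclass_def by (blast intro: Kequiv_sym Kequiv_trans)

lemma Kmove_1_1_imp_eq_or_Kstep: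
  assumes "Kmove c 1 1 u v"
  shows "v = u \<or> Kstep c u v"
proof -
  consider "min_window_swap c u v"
    | s s' where "s < length u" "s' < length u" "v = list_swap s s' u"
        "s < 1 \<and> s' < 1 \<or> length u - 1 \<le> s \<and> length u - 1 \<le> s'"
    using assms unfolding Kmove_def by blast
  then show ?thesis
  proof cases
    case (2 s s')
    then have "s = s'" by linarith
    with 2 show ?thesis by simp
  qed (use Kstep_if_min_window_swap in blast)
qed

lemma Kequiv_if_equivclp_Kmove:
  assumes "equivclp (Kmove c 1 1) x y" and "x \<in> Sn n"
  shows "Kequiv c n x y"
  using assms(1)
proof (induction rule: equivclp_induct)
  case base
  show ?case using assms(2) by (simp add: Kequiv_def)
next
  case (step y z)
  have yz: "set z = set y \<and> distinct z = distinct y"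
    using step.hyps equivclp_Kmove_preserves[of c 1 1 x y] equivclp_Kmove_preserves[of c 1 1 x z]
    by (metis equivclp_into_equivclp)
  have "z \<in> Sn n" using step.IH yz by (simp add: Kequiv_def permutations_of_set_def)
  moreover have "z = y \<or> Kstep c y z \<or> Kstep c z y"
    using step.hyps(2) Kmove_1_1_imp_eq_or_Kstep by blast
  ultimately show ?case using step.IH unfolding Kequiv_def
    by (auto intro: rtranclp.rtrancl_into_rtrancl)
qed

section \<open>Generating transpositions\<close>

definition swappable :: "nat \<Rightarrow> nat \<Rightarrow> nat \<Rightarrow> (nat list \<Rightarrow> bool) \<Rightarrow> nat set \<Rightarrow> bool" where
  "swappable c a b P I \<longleftrightarrow> (\<forall>x. P x \<longrightarrow> (\<forall>s \<in> I. \<forall>s' \<in> I. s < length x \<and> P (list_swap s s' x) \<and>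
      equivclp (Kmove c a b) x (list_swap s s' x)))"

lemma swappable_subset: "swappable c a b P I \<Longrightarrow> J \<subseteq> I \<Longrightarrow> swappable c a b P J"
  unfolding swappable_def by blast

lemma swappable_Un:
  assumes A: "swappable c a b P A" and B: "swappable c a b P B" and AB: "A \<inter> B \<noteq> {}"
  shows "swappable c a b P (A \<union> B)"
proof -
  obtain t where t: "t \<in> A" "t \<in> B" using AB by blast
  have across: "P (list_swap s s' x) \<and> equivclp (Kmove c a b) x (list_swap s s' x)"
    if x: "P x" and s: "s \<in> A" and s': "s' \<in> B" for x s s'
  proof (cases "s = t \<or> s' = t \<or> s = s'")
    case True
    then consider "s' \<in> A" | "s \<in> B" | "s = s'" using t by blast
    then show ?thesis by cases (use A B x s s' in \<open>auto simp: swappable_def\<close>)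
  next
    case False
    define x1 where "x1 = list_swap s t x"
    define x2 where "x2 = list_swap t s' x1"
    have x1: "P x1" "equivclp (Kmove c a b) x x1" using A x s t by (auto simp: swappable_def x1_def)
    have x2: "P x2" "equivclp (Kmove c a b) x1 x2" using B x1 s' t by (auto simp: swappable_def x2_def)
    have x3: "P (list_swap s t x2)" "equivclp (Kmove c a b) x2 (list_swap s t x2)"
      using A x2 s t by (auto simp: swappable_def)
    have "s < length x" "t < length x" "s' < length x"
      using A B x s s' t unfolding swappable_def by blast+
    then have "list_swap s t x2 = list_swap s s' x"
      using False list_swap_conjugate[of s x t s'] by (simp add: x1_def x2_def)
    then show ?thesis using x1 x2 x3 by (auto intro: equivclp_trans)
  qed
  show ?thesis unfolding swappable_def
  proof (intro allI impI ballI conjI)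
    fix x s s' assume x: "P x" and s: "s \<in> A \<union> B" and s': "s' \<in> A \<union> B"
    show "s < length x" using A B x s by (auto simp: swappable_def)
    consider "s \<in> A" "s' \<in> A" | "s \<in> B" "s' \<in> B" | "s \<in> A" "s' \<in> B" | "s \<in> B" "s' \<in> A"
      using s s' by blast
    then have "P (list_swap s s' x) \<and> equivclp (Kmove c a b) x (list_swap s s' x)"
    proof cases
      case 4
      then show ?thesis using across[of x s' s] x by (simp add: list_swap_commute)
    qed (use A B x across in \<open>auto simp: swappable_def\<close>)
    then show "P (list_swap s s' x)" "equivclp (Kmove c a b) x (list_swap s s' x)" by auto
  qed
qed

lemma swappable_front:
  assumes "\<And>x s s'. P x \<Longrightarrow> s \<in> I \<Longrightarrow> s' \<in> I \<Longrightarrow> s < length x \<and> P (list_swap s s' x)"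
    and "I \<subseteq> {..<a}"
  shows "swappable c a b P I"
  using assms equivclp_Kmove_front unfolding swappable_def by (metis lessThan_iff subsetD)

lemma swappable_back:
  assumes "\<And>x s s'. P x \<Longrightarrow> s \<in> I \<Longrightarrow> s' \<in> I \<Longrightarrow> s < length x \<and> P (list_swap s s' x)"
    and "\<And>x s. P x \<Longrightarrow> s \<in> I \<Longrightarrow> length x - b \<le> s"
  shows "swappable c a b P I"
  using assms equivclp_Kmove_back unfolding swappable_def by metis

lemma mismatches_list_swap_psubset:
  assumes w': "distinct w'" "length w' = length w"
    and i: "i < length w" "w ! i \<noteq> w' ! i" and j: "j < length w" "w ! j = w' ! i"
  shows "{k. k < length w \<and> list_swap i j w ! k \<noteq> w' ! k} \<subset> {k. k < length w \<and> w ! k \<noteq> w' ! k}"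
proof -
  have "w ! j \<noteq> w' ! j" using w' i j by (metis nth_eq_iff_index_eq)
  then have "{k. k < length w \<and> list_swap i j w ! k \<noteq> w' ! k} \<subseteq> {k. k < length w \<and> w ! k \<noteq> w' ! k}"
    using i j by (auto simp: nth_list_swap split: if_splits)
  moreover have "list_swap i j w ! i = w' ! i" using i j by (simp add: nth_list_swap)
  ultimately show ?thesis using i by blast
qed

lemma equivclp_Kmove_if_swappable:
  assumes "swappable c a b P I" and "P w" and "distinct w" "distinct w'" "set w' = set w"
    and "\<forall>i < length w. i \<notin> I \<longrightarrow> w ! i = w' ! i"
  shows "equivclp (Kmove c a b) w w'"
  using assms(2-)
proof (induction "card {i. i < length w \<and> w ! i \<noteq> w' ! i}" arbitrary: w rule: less_induct)
  case less
  have lw: "length w' = length w" using less.prems by (metis distinct_card)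
  show ?case
  proof (cases "\<exists>i < length w. w ! i \<noteq> w' ! i")
    case False
    then have "w = w'" using lw by (auto intro: nth_equalityI)
    then show ?thesis by simp
  next
    case True
    then obtain i where i: "i < length w" "w ! i \<noteq> w' ! i" by blast
    obtain j where j: "j < length w" "w ! j = w' ! i"
      using less.prems(4) lw i by (metis in_set_conv_nth nth_mem)
    have "w ! j \<noteq> w' ! j" using j i lw less.prems(3) by (metis nth_eq_iff_index_eq)
    then have ij: "i \<in> I" "j \<in> I" using less.prems(5) i j by auto
    define w2 where "w2 = list_swap i j w"
    have w2: "P w2" "equivclp (Kmove c a b) w w2"
      using assms(1) less.prems(1) ij by (auto simp: swappable_def w2_def)
    have "{k. k < length w2 \<and> w2 ! k \<noteq> w' ! k} \<subset> {k. k < length w \<and> w ! k \<noteq> w' ! k}"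
      unfolding w2_def length_list_swap using less.prems(3) lw i j by (rule mismatches_list_swap_psubset)
    then have "card {k. k < length w2 \<and> w2 ! k \<noteq> w' ! k} < card {k. k < length w \<and> w ! k \<noteq> w' ! k}"
      by (simp add: psubset_card_mono)
    moreover have "\<forall>k < length w2. k \<notin> I \<longrightarrow> w2 ! k = w' ! k"
      using less.prems(5) ij i j by (auto simp: w2_def nth_list_swap)
    moreover have "distinct w2" "set w' = set w2" using less.prems i j by (auto simp: w2_def)
    ultimately have "equivclp (Kmove c a b) w2 w'"
      using less.hyps w2(1) less.prems(3) by blast
    with w2(2) show ?thesis by (rule equivclp_trans)
  qed
qed

lemma equivclp_Kmove_if_ends_overlap:
  assumes "1 \<le> a" "1 \<le> b" "length v + 1 \<le> a + b"
    and "distinct v" "distinct v'" "set v' = set v"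
  shows "equivclp (Kmove c a b) v v'"
proof (cases "v = []")
  case True
  then show ?thesis using assms by simp
next
  case False
  define N where "N = length v"
  define P where "P x \<longleftrightarrow> distinct x \<and> length x = N" for x :: "nat list"
  have closed: "s < length x \<and> P (list_swap s s' x)" if "P x" "s \<in> {..<N}" "s' \<in> {..<N}" for x s s'
    using that by (simp add: P_def)
  have "swappable c a b P {..<min a N}"
    by (rule swappable_front) (use closed in auto)
  moreover have "swappable c a b P {N - b..<N}"
    by (rule swappable_back) (use closed in \<open>auto simp: P_def\<close>)
  moreover have "N - b \<in> {..<min a N} \<inter> {N - b..<N}" using assms False by (auto simp: N_def)
  ultimately have "swappable c a b P ({..<min a N} \<union> {N - b..<N})"
    by (blast intro: swappable_Un)
  moreover have "{..<N} \<subseteq> {..<min a N} \<union> {N - b..<N}" using assms by (auto simp: N_def)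
  ultimately have "swappable c a b P {..<N}" by (rule swappable_subset)
  then show ?thesis
    by (rule equivclp_Kmove_if_swappable) (use assms in \<open>auto simp: P_def N_def\<close>)
qed

definition head_min :: "nat \<Rightarrow> nat list \<Rightarrow> bool" where
  "head_min N x \<longleftrightarrow> distinct x \<and> length x = N \<and> (\<forall>i < N. 0 < i \<longrightarrow> x ! 0 < x ! i)"

lemma head_min_list_swap:
  assumes "head_min N x" "s \<in> {1..<N}" "s' \<in> {1..<N}"
  shows "head_min N (list_swap s s' x)"
  using assms unfolding head_min_def by (auto simp: nth_list_swap)

lemma swappable_window:
  assumes "q < a" "q + c < N"
  shows "swappable c a b (head_min N) {q<..q+c}"
  unfolding swappable_def
proof (intro allI impI ballI conjI)
  fix x s s' assume x: "head_min N x" and s: "s \<in> {q<..q+c}" and s': "s' \<in> {q<..q+c}"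
  have len: "length x = N" using x by (simp add: head_min_def)
  show "s < length x" using s assms len by simp
  show "head_min N (list_swap s s' x)" using x s s' assms by (intro head_min_list_swap) auto
  define x1 where "x1 = list_swap 0 q x"
  have lx1: "length x1 = N" using len by (simp add: x1_def)
  have "equivclp (Kmove c a b) x x1" unfolding x1_def using assms len by (intro equivclp_Kmove_front) auto
  moreover have "min_window_swap c x1 (list_swap s s' x1)"
    unfolding min_window_swap_def
  proof (intro conjI exI)
    show "distinct x1" using x assms len by (simp add: x1_def head_min_def)
    show "\<forall>i \<in> {q..q+c} - {q}. x1 ! q < x1 ! i"
      using x assms len by (auto simp: x1_def head_min_def nth_list_swap)
  qed (use s s' assms lx1 in auto)
  then have "equivclp (Kmove c a b) x1 (list_swap s s' x1)" by (simp add: Kmove_def r_into_equivclp)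
  moreover have "equivclp (Kmove c a b) (list_swap s s' x1) (list_swap 0 q (list_swap s s' x1))"
    using assms lx1 by (intro equivclp_Kmove_front) auto
  moreover have "list_swap 0 q (list_swap s s' x1) = list_swap s s' x"
    unfolding x1_def using s s' assms len by (intro list_swap_conjugate_disjoint) auto
  ultimately show "equivclp (Kmove c a b) x (list_swap s s' x)" by (metis equivclp_trans)
qed

lemma swappable_head_min_front: "swappable c a b (head_min N) {1..<min a N}"
proof (rule swappable_front)
  fix x s s' assume "head_min N x" "s \<in> {1..<min a N}" "s' \<in> {1..<min a N}"
  then show "s < length x \<and> head_min N (list_swap s s' x)"
    using head_min_list_swap[of N x s s'] by (auto simp: head_min_def)
qed auto

lemma swappable_head_min:
  assumes "1 \<le> c" "1 \<le> a" "c = 1 \<longrightarrow> a = 1" "c + 1 \<le> N \<or> N \<le> a \<or> N \<le> b"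
  shows "swappable c a b (head_min N) {1..min (a + c - 1) (N - 1)}"
proof -
  let ?P = "head_min N"
  define e where "e = min (a + c - 1) (N - 1)"
  have front: "swappable c a b ?P {1..<min a N}" by (rule swappable_head_min_front)
  consider "N \<le> b" | "N \<le> a" | "c + 1 \<le> N" "a < N" using assms(4) by linarith
  then show ?thesis
  proof cases
    case 1
    show ?thesis
    proof (rule swappable_back)
      fix x s s' assume "?P x" "s \<in> {1..min (a + c - 1) (N - 1)}" "s' \<in> {1..min (a + c - 1) (N - 1)}"
      then show "s < length x \<and> ?P (list_swap s s' x)"
        using head_min_list_swap[of N x s s'] by (auto simp: head_min_def)
    qed (use 1 in \<open>auto simp: head_min_def\<close>)
  next
    case 2
    then have "{1..min (a + c - 1) (N - 1)} \<subseteq> {1..<min a N}" by auto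
    with front show ?thesis by (rule swappable_subset)
  next
    case 3
    define q where "q = e - c"
    have e: "e = q + c" "q < a" "q + c < N" using 3 assms(1,2) by (auto simp: q_def e_def)
    show ?thesis
    proof (cases "q = 0")
      case True
      then show ?thesis using swappable_window[of 0 a c N b] e unfolding e_def[symmetric]
        by (auto elim: swappable_subset)
    next
      case False
      then have c2: "2 \<le> c" using e assms(1,3) by auto
      have "swappable c a b ?P {q - 1<..q - 1 + c}" using e by (intro swappable_window) auto
      moreover have "q \<in> {1..<min a N} \<inter> {q - 1<..q - 1 + c}" using False e c2 by auto
      ultimately have "swappable c a b ?P ({1..<min a N} \<union> {q - 1<..q - 1 + c})"
        using front by (blast intro: swappable_Un)
      moreover have "swappable c a b ?P {q<..q + c}" using e by (intro swappable_window) auto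
      moreover have "q + 1 \<in> ({1..<min a N} \<union> {q - 1<..q - 1 + c}) \<inter> {q<..q + c}"
        using False c2 by auto
      ultimately have "swappable c a b ?P ({1..<min a N} \<union> {q - 1<..q - 1 + c} \<union> {q<..q + c})"
        by (blast intro: swappable_Un)
      moreover have "{1..e} \<subseteq> {1..<min a N} \<union> {q - 1<..q - 1 + c} \<union> {q<..q + c}"
        using e False 3 by auto
      ultimately show ?thesis unfolding e_def by (rule swappable_subset)
    qed
  qed
qed

lemma min_window_swap_Cons:
  assumes "min_window_swap c u v" "m \<notin> set u"
  shows "min_window_swap c (m # u) (m # v)"
proof -
  obtain q p s s' where q: "q + c < length u" "p = q \<or> p = q + c"
    and min: "\<forall>i \<in> {q..q+c} - {p}. u ! p < u ! i"
    and s: "s \<in> {q..q+c} - {p}" "s' \<in> {q..q+c} - {p}" and v: "v = list_swap s s' u"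
    and d: "distinct u"
    using assms(1) unfolding min_window_swap_def by blast
  have "\<forall>i \<in> {Suc q..Suc q + c} - {Suc p}. (m # u) ! Suc p < (m # u) ! i"
  proof
    fix i assume "i \<in> {Suc q..Suc q + c} - {Suc p}"
    then obtain i' where "i = Suc i'" "i' \<in> {q..q+c} - {p}" by (cases i) auto
    then show "(m # u) ! Suc p < (m # u) ! i" using min by simp
  qed
  moreover have "m # v = list_swap (Suc s) (Suc s') (m # u)" using v by (simp add: list_swap_Cons)
  moreover have "Suc s \<in> {Suc q..Suc q + c} - {Suc p}" "Suc s' \<in> {Suc q..Suc q + c} - {Suc p}"
    "Suc q + c < length (m # u)" "Suc p = Suc q \<or> Suc p = Suc q + c" "distinct (m # u)"
    using s q d assms(2) by auto
  ultimately show ?thesis unfolding min_window_swap_def by blast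
qed

lemma equivclp_Kmove_Cons:
  assumes moves: "equivclp (Kmove c (a + c - 1) b) y y'"
    and min: "distinct (m # y)" "\<forall>z \<in> set y. m < z"
    and params: "1 \<le> c" "1 \<le> a" "c = 1 \<longrightarrow> a = 1"
    and len: "c + 1 \<le> length (m # y) \<or> length (m # y) \<le> a \<or> length (m # y) \<le> b"
  shows "equivclp (Kmove c a b) (m # y) (m # y')"
  using moves
proof (rule equivclp_map_on)
  fix u v assume "equivclp (Kmove c (a + c - 1) b) y u" "equivclp (Kmove c (a + c - 1) b) y v"
    and move: "Kmove c (a + c - 1) b u v"
  then have u: "head_min (length (m # y)) (m # u)" "length u = length y"
    using min equivclp_Kmove_preserves[of c "a + c - 1" b y u]
    by (auto simp: head_min_def nth_Cons')
  consider "min_window_swap c u v"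
    | s s' where "s < length u" "s' < length u" "v = list_swap s s' u" "s < a + c - 1" "s' < a + c - 1"
    | s s' where "s < length u" "s' < length u" "v = list_swap s s' u"
        "length u - b \<le> s" "length u - b \<le> s'"
    using move unfolding Kmove_def by blast
  then show "equivclp (Kmove c a b) (m # u) (m # v)"
  proof cases
    case 1
    then have "min_window_swap c (m # u) (m # v)"
      using u by (intro min_window_swap_Cons) (auto simp: head_min_def)
    then show ?thesis by (simp add: Kmove_def r_into_equivclp)
  next
    case (2 s s')
    have "Suc s \<in> {1..min (a + c - 1) (length (m # y) - 1)}" "Suc s' \<in> {1..min (a + c - 1) (length (m # y) - 1)}"
      using 2 u by auto
    with swappable_head_min[OF params len] u have "equivclp (Kmove c a b) (m # u) (list_swap (Suc s) (Suc s') (m # u))"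
      unfolding swappable_def by blast
    with 2 show ?thesis by (simp add: list_swap_Cons)
  next
    case (3 s s')
    then have "equivclp (Kmove c a b) (m # u) (list_swap (Suc s) (Suc s') (m # u))"
      by (intro equivclp_Kmove_back) auto
    with 3 show ?thesis by (simp add: list_swap_Cons)
  qed
qed

section \<open>Squished configurations\<close>

definition front_squished :: "nat \<Rightarrow> nat \<Rightarrow> nat set \<Rightarrow> nat list \<Rightarrow> bool" where
  "front_squished c a L v \<longleftrightarrow>
     (\<forall>i < card L. \<exists>p < length v. p < a + c * i \<and> v ! p = sorted_list_of_set L ! i)"

lemma front_squished_rev_iff:
  "front_squished c b R (rev v) \<longleftrightarrow>
     (\<forall>i < card R. \<exists>p < length v. length v - (b + c * i) \<le> p \<and> v ! p = sorted_list_of_set R ! i)"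
proof -
  have "(\<exists>p < length v. p < b + c * i \<and> rev v ! p = r) \<longleftrightarrow>
      (\<exists>p < length v. length v - (b + c * i) \<le> p \<and> v ! p = r)" for i r
  proof
    assume "\<exists>p < length v. p < b + c * i \<and> rev v ! p = r"
    then obtain p where "p < length v" "p < b + c * i" "rev v ! p = r" by blast
    then show "\<exists>p < length v. length v - (b + c * i) \<le> p \<and> v ! p = r"
      by (intro exI[of _ "length v - 1 - p"]) (auto simp: rev_nth)
  next
    assume "\<exists>p < length v. length v - (b + c * i) \<le> p \<and> v ! p = r"
    then obtain p where "p < length v" "length v - (b + c * i) \<le> p" "v ! p = r" by blast
    then show "\<exists>p < length v. p < b + c * i \<and> rev v ! p = r"
      by (intro exI[of _ "length v - 1 - p"]) (auto simp: rev_nth)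
  qed
  then show ?thesis unfolding front_squished_def by simp
qed

text \<open>The j,k-squished permutations are the case a = b = 1, R = {1..j+k} - L. Removing the smallest
  letter of L from the front turns the slack a into a + c - 1, which is why the slacks are
  parameters.\<close>
definition squished_config :: "nat \<Rightarrow> nat \<Rightarrow> nat \<Rightarrow> nat set \<Rightarrow> nat set \<Rightarrow> nat list \<Rightarrow> bool" where
  "squished_config c a b L R v \<longleftrightarrow> finite L \<and> finite R \<and> L \<inter> R = {} \<and> distinct v \<and>
     L \<union> R \<subseteq> set v \<and> (\<forall>x \<in> set v - (L \<union> R). \<forall>y \<in> L \<union> R. y < x) \<and>
     length v + 1 \<le> a + b + c * (card L + card R) \<and>
     (c + 1 \<le> length v \<or> length v \<le> a \<or> length v \<le> b) \<and>
     front_squished c a L v \<and> front_squished c b R (rev v)"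

lemma squished_config_rev:
  "squished_config c a b L R v \<Longrightarrow> squished_config c b a R L (rev v)"
  unfolding squished_config_def by (auto simp: ac_simps)

definition front_removal :: "nat \<Rightarrow> nat \<Rightarrow> nat list \<Rightarrow> nat list \<Rightarrow> bool" where
  "front_removal a m v y \<longleftrightarrow> set y = set v - {m} \<and> distinct y \<and> length v = Suc (length y) \<and>
     (\<forall>p < length v. v ! p \<noteq> m \<longrightarrow>
       (\<exists>p' < length y. y ! p' = v ! p \<and> p \<le> p' + 1 \<and> (p' < p \<or> p' + 1 < a)))"

lemma equivclp_Kmove_to_front:
  assumes d: "distinct v" and pm: "pm < length v" "pm < a" "v ! pm = m"
  shows "\<exists>y. equivclp (Kmove c a b) v (m # y) \<and> front_removal a m v y"
proof -
  have pos: "0 < length v" using pm by linarith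
  define v1 where "v1 = list_swap 0 pm v"
  define y where "y = tl v1"
  have v1_nth: "v1 ! k = (if k = pm then v ! 0 else if k = 0 then m else v ! k)" if "k < length v" for k
    using that pm nth_list_swap[of 0 v pm k] by (cases v) (auto simp: v1_def)
  have "length v1 = length v" by (simp add: v1_def)
  then have "v1 \<noteq> []" "v1 ! 0 = m" using v1_nth[of 0] pm pos by auto
  then have v1: "v1 = m # y" by (cases v1) (auto simp: y_def)
  have "set v1 = set v" "distinct v1" "length v1 = length v" using pm d pos by (auto simp: v1_def)
  then have y: "set y = set v - {m}" "distinct y" "length v = Suc (length y)"
    using v1 by auto
  have moved: "equivclp (Kmove c a b) v (m # y)"
    using equivclp_Kmove_front[of 0 a pm v c b] pm pos v1 by (simp add: v1_def)
  have "\<exists>p' < length y. y ! p' = v ! p \<and> p \<le> p' + 1 \<and> (p' < p \<or> p' + 1 < a)"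
    if p: "p < length v" "v ! p \<noteq> m" for p
  proof (cases "p = 0")
    case True
    then have "0 < pm" using p pm by (metis gr0I)
    then have "y ! (pm - 1) = v ! p" using v1 v1_nth[of pm] pm True by (simp add: nth_Cons')
    then show ?thesis using pm True \<open>0 < pm\<close> y by (intro exI[of _ "pm - 1"]) auto
  next
    case False
    then have "y ! (p - 1) = v ! p" using v1 v1_nth[of p] pm p by (auto simp: nth_Cons')
    then show ?thesis using p False y by (intro exI[of _ "p - 1"]) auto
  qed
  then show ?thesis using moved y unfolding front_removal_def by blast
qed

lemma front_squished_front_removal:
  assumes "front_squished c a L v" "finite L" "m \<in> L" "\<forall>x \<in> L. m \<le> x" "front_removal a m v y"
  shows "front_squished c (a + c - 1) (L - {m}) y"
  unfolding front_squished_def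
proof (intro allI impI)
  fix i assume i: "i < card (L - {m})"
  have "Min L = m" using assms by (intro Min_eqI) auto
  then have sorted_L: "sorted_list_of_set L = m # sorted_list_of_set (L - {m})"
    using sorted_list_of_set_nonempty[of L] assms(2,3) by auto
  have "Suc i < card L" using i card_Suc_Diff1[OF assms(2,3)] by simp
  then obtain p where p: "p < length v" "p < a + c + c * i" "v ! p = sorted_list_of_set (L - {m}) ! i"
    using assms(1) sorted_L unfolding front_squished_def by fastforce
  have "sorted_list_of_set (L - {m}) ! i \<in> set (sorted_list_of_set (L - {m}))"
    using i by (intro nth_mem) simp
  then have "v ! p \<noteq> m" using p assms(2) by simp
  then obtain p' where "p' < length y" "y ! p' = v ! p" "p' < p \<or> p' + 1 < a"
    using assms(5) p(1) unfolding front_removal_def by blast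
  then show "\<exists>p' < length y. p' < a + c - 1 + c * i \<and> y ! p' = sorted_list_of_set (L - {m}) ! i"
    using p by (intro exI[of _ p']) auto
qed

lemma front_squished_rev_front_removal:
  assumes "front_squished c b R (rev v)" "finite R" "m \<notin> R" "front_removal a m v y"
  shows "front_squished c b R (rev y)"
  unfolding front_squished_rev_iff
proof (intro allI impI)
  fix i assume i: "i < card R"
  obtain p where p: "p < length v" "length v - (b + c * i) \<le> p" "v ! p = sorted_list_of_set R ! i"
    using assms(1) i unfolding front_squished_rev_iff by blast
  have "sorted_list_of_set R ! i \<in> set (sorted_list_of_set R)" using i by (intro nth_mem) simp
  then have "v ! p \<noteq> m" using p assms(2,3) by auto
  then obtain p' where "p' < length y" "y ! p' = v ! p" "p \<le> p' + 1"
    using assms(4) p(1) unfolding front_removal_def by blast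
  then show "\<exists>p' < length y. length y - (b + c * i) \<le> p' \<and> y ! p' = sorted_list_of_set R ! i"
    using p assms(4) by (intro exI[of _ p']) (auto simp: front_removal_def)
qed

lemma squished_config_remove_min:
  assumes conf: "squished_config c a b L R v" and m: "m = Min (L \<union> R)" "m \<in> L" and c: "1 \<le> c"
  shows "\<exists>y. equivclp (Kmove c a b) v (m # y) \<and> (\<forall>z \<in> set y. m < z) \<and>
    squished_config c (a + c - 1) b (L - {m}) R y"
proof -
  have fin: "finite L" "finite R" and d: "distinct v" and LR: "L \<inter> R = {}" "L \<union> R \<subseteq> set v"
    and large_rest: "\<forall>x \<in> set v - (L \<union> R). \<forall>y \<in> L \<union> R. y < x"
    and len: "length v + 1 \<le> a + b + c * (card L + card R)"
    and front_L: "front_squished c a L v" and back_R: "front_squished c b R (rev v)"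
    using conf unfolding squished_config_def by blast+
  have m_le: "\<forall>x \<in> L \<union> R. m \<le> x" using m fin by simp
  have "Min L = m" using m m_le fin by (intro Min_eqI) auto
  moreover have "L \<noteq> {}" using m by auto
  ultimately have "sorted_list_of_set L ! 0 = m" using sorted_list_of_set_nonempty[of L] fin by simp
  moreover have "0 < card L" using fin m by (auto simp: card_gt_0_iff)
  ultimately obtain pm where "pm < length v" "pm < a" "v ! pm = m"
    using front_L unfolding front_squished_def by fastforce
  with d obtain y where moved: "equivclp (Kmove c a b) v (m # y)" and y: "front_removal a m v y"
    using equivclp_Kmove_to_front by blast
  have set_y: "set y = set v - {m}" "distinct y" "length v = Suc (length y)"
    using y by (auto simp: front_removal_def)
  have card_L: "card L = Suc (card (L - {m}))" using fin m by (metis card_Suc_Diff1)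
  have "front_squished c (a + c - 1) (L - {m}) y"
    using m_le by (intro front_squished_front_removal[OF front_L fin(1) m(2) _ y]) blast
  moreover have "front_squished c b R (rev y)"
    using m(2) LR(1) by (intro front_squished_rev_front_removal[OF back_R fin(2) _ y]) blast
  moreover have "length y + 1 \<le> a + c - 1 + b + c * (card (L - {m}) + card R)"
    using len set_y card_L c by (simp add: algebra_simps)
  moreover have "c + 1 \<le> length y \<or> length y \<le> a + c - 1 \<or> length y \<le> b"
    using \<open>pm < a\<close> by linarith
  moreover have "L - {m} \<union> R \<subseteq> set y" using LR set_y(1) m(2) by blast
  moreover have "\<forall>x \<in> set y - (L - {m} \<union> R). \<forall>z \<in> L - {m} \<union> R. z < x"
    using large_rest set_y(1) by blast
  moreover have "m < z" if "z \<in> set y" for z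
  proof (cases "z \<in> L \<union> R")
    case True
    then have "m \<le> z" "z \<noteq> m" using that set_y m_le by auto
    then show ?thesis by simp
  next
    case False
    then show ?thesis using that set_y large_rest m by auto
  qed
  moreover have "finite (L - {m})" "(L - {m}) \<inter> R = {}" using fin LR by auto
  ultimately show ?thesis using moved fin(2) set_y(2) unfolding squished_config_def by blast
qed

lemma equivclp_Kmove_remove_min_step:
  assumes conf: "squished_config c a b L R w" "squished_config c a b L R w'" "set w' = set w"
    and params: "1 \<le> c" "1 \<le> a" "c = 1 \<longrightarrow> a = 1"
    and m: "m = Min (L \<union> R)" "m \<in> L"
    and reduced: "\<And>y y'. squished_config c (a + c - 1) b (L - {m}) R y \<Longrightarrow>
      squished_config c (a + c - 1) b (L - {m}) R y' \<Longrightarrow> set y' = set y \<Longrightarrow>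
      equivclp (Kmove c (a + c - 1) b) y y'"
  shows "equivclp (Kmove c a b) w w'"
proof -
  obtain y where y: "equivclp (Kmove c a b) w (m # y)" "\<forall>z \<in> set y. m < z"
    "squished_config c (a + c - 1) b (L - {m}) R y"
    using squished_config_remove_min[OF conf(1) m params(1)] by blast
  obtain y' where y': "equivclp (Kmove c a b) w' (m # y')"
    "squished_config c (a + c - 1) b (L - {m}) R y'"
    using squished_config_remove_min[OF conf(2) m params(1)] by blast
  have w: "set (m # y) = set w" "distinct (m # y)" "length (m # y) = length w"
    using equivclp_Kmove_preserves[OF y(1)] conf(1) by (auto simp: squished_config_def)
  have "set (m # y') = set w'" "distinct (m # y')"
    using equivclp_Kmove_preserves[OF y'(1)] conf(2) by (auto simp: squished_config_def)
  then have "set y' = set y" using w conf(3) by auto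
  then have "equivclp (Kmove c (a + c - 1) b) y y'" using reduced y(3) y'(2) by blast
  then have "equivclp (Kmove c a b) (m # y) (m # y')"
    using w y(2) params conf(1) by (intro equivclp_Kmove_Cons) (auto simp: squished_config_def)
  then show ?thesis using y(1) y'(1) by (blast intro: equivclp_trans equivclp_sym)
qed

lemma equivclp_Kmove_if_squished_config:
  assumes "squished_config c a b L R v" "squished_config c a b L R v'" "set v' = set v"
    and "1 \<le> c" "1 \<le> a" "1 \<le> b" "c = 1 \<longrightarrow> a = 1 \<and> b = 1"
  shows "equivclp (Kmove c a b) v v'"
  using assms
proof (induction "card L + card R" arbitrary: a b L R v v' rule: less_induct)
  case less
  have fin: "finite L" "finite R" using less.prems(1) by (auto simp: squished_config_def)
  show ?case
  proof (cases "L \<union> R = {}")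
    case True
    then show ?thesis
      using less.prems fin by (intro equivclp_Kmove_if_ends_overlap) (auto simp: squished_config_def)
  next
    case False
    define m where "m = Min (L \<union> R)"
    have "m \<in> L \<union> R" using False fin unfolding m_def by (intro Min_in) auto
    then show ?thesis
    proof
      assume mL: "m \<in> L"
      have smaller: "card (L - {m}) + card R < card L + card R"
        using fin mL card_Diff1_less[of L m] by linarith
      have "equivclp (Kmove c (a + c - 1) b) y y'"
        if "squished_config c (a + c - 1) b (L - {m}) R y"
          "squished_config c (a + c - 1) b (L - {m}) R y'" "set y' = set y" for y y'
        using less.hyps[OF smaller that] less.prems(4-7) by auto
      moreover have "c = 1 \<longrightarrow> a = 1" using less.prems(7) by simp
      ultimately show ?thesis
        using equivclp_Kmove_remove_min_step[OF less.prems(1-5) _ m_def mL] by blast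
    next
      assume mR: "m \<in> R"
      have smaller: "card (R - {m}) + card L < card L + card R"
        using fin mR card_Diff1_less[of R m] by linarith
      have "equivclp (Kmove c (b + c - 1) a) y y'"
        if "squished_config c (b + c - 1) a (R - {m}) L y"
          "squished_config c (b + c - 1) a (R - {m}) L y'" "set y' = set y" for y y'
        using less.hyps[OF smaller that] less.prems(4-7) by auto
      moreover have "m = Min (R \<union> L)" by (simp add: m_def Un_commute)
      moreover have "squished_config c b a R L (rev v)" "squished_config c b a R L (rev v')"
        "set (rev v') = set (rev v)" "c = 1 \<longrightarrow> b = 1"
        using less.prems by (simp_all add: squished_config_rev)
      ultimately have "equivclp (Kmove c b a) (rev v) (rev v')"
        using equivclp_Kmove_remove_min_step[of c b a R L "rev v" "rev v'" m] less.prems(4,6) mR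
        by blast
      then show ?thesis by (simp add: equivclp_Kmove_rev_iff)
    qed
  qed
qed

lemma squished_config_if_squished:
  assumes w: "w \<in> Sn n" "squished c j k L w"
    and L: "L \<subseteq> {1..j+k}" "card L = j" and n: "j + k \<le> n" "n \<le> c * k + c * j + 1" "c + 1 \<le> n"
  shows "squished_config c 1 1 L ({1..j+k} - L) w"
proof -
  define R where "R = {1..j+k} - L"
  have fin: "finite L" "finite R" using L finite_subset by (auto simp: R_def)
  have card_R: "card R = k" using L fin by (simp add: R_def card_Diff_subset)
  have LR: "L \<union> R = {1..j+k}" "L \<inter> R = {}" using L by (auto simp: R_def)
  have set_w: "set w = {1..n}" "distinct w" using w by (auto simp: permutations_of_set_def)
  then have len_w: "length w = n" using distinct_card by fastforce
  have "front_squished c 1 L w"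
    using w L unfolding squished_def front_squished_def by (simp add: add.commute)
  moreover have "front_squished c 1 R (rev w)"
    using w card_R unfolding squished_def front_squished_rev_iff by (simp add: add.commute R_def)
  moreover have "L \<union> R \<subseteq> set w" "\<forall>x \<in> set w - (L \<union> R). \<forall>y \<in> L \<union> R. y < x"
    using LR set_w n by auto
  moreover have "length w + 1 \<le> 1 + 1 + c * (card L + card R)"
    using len_w L n card_R by (simp add: algebra_simps)
  ultimately show ?thesis
    using fin LR set_w len_w n unfolding squished_config_def R_def by auto
qed

lemma squished_exists:
  assumes L: "L \<subseteq> {1..j+k}" "card L = j" and n: "j + k \<le> n" and c: "1 \<le> c"
  shows "\<exists>w \<in> Sn n. squished c j k L w"
proof -
  define R where "R = {1..j+k} - L"
  define sL where "sL = sorted_list_of_set L"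
  define sR where "sR = sorted_list_of_set R"
  define M where "M = [j+k+1..<n+1]"
  define w where "w = sL @ M @ rev sR"
  have fin: "finite L" "finite R" using L finite_subset by (auto simp: R_def)
  have c_mult: "i \<le> c * i" for i using c by simp
  have len: "length sL = j" "length sR = k" "length w = n"
    using L fin n by (auto simp: sL_def sR_def w_def M_def R_def card_Diff_subset)
  have "set w = L \<union> {j+k+1..<n+1} \<union> R" using fin by (auto simp: w_def sL_def sR_def M_def)
  also have "\<dots> = {1..n}" using L n by (auto simp: R_def)
  finally have "set w = {1..n}" .
  moreover have "distinct w" using L fin by (auto simp: w_def sL_def sR_def M_def R_def)
  ultimately have "w \<in> Sn n" by (simp add: permutations_of_set_def)
  moreover have "squished c j k L w"
    unfolding squished_def
  proof (intro conjI allI impI)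
    fix i assume i: "i < j"
    have "i < c * i + 1" using c_mult[of i] by linarith
    then show "\<exists>p < length w. p < c * i + 1 \<and> w ! p = sorted_list_of_set L ! i"
      using i len by (intro exI[of _ i]) (auto simp: w_def sL_def nth_append)
  next
    fix i assume i: "i < k"
    have "length M = n - (j + k)" unfolding M_def length_upt by simp
    then have "n - 1 - i = length sL + (length M + (k - 1 - i))" using i len n by linarith
    then have "w ! (n - 1 - i) = rev sR ! (k - 1 - i)" by (simp only: w_def nth_append_length_plus)
    also have "\<dots> = sR ! i" using i len by (simp add: rev_nth)
    finally show "\<exists>p < length w. length w - (c * i + 1) \<le> p \<and>
        w ! p = sorted_list_of_set ({1..j + k} - L) ! i"
      using i len n c_mult[of i] by (intro exI[of _ "n - 1 - i"]) (auto simp: sR_def R_def diff_le_mono2)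
  qed
  ultimately show ?thesis by blast
qed

theorem lemma3p7:
  fixes c j k n :: nat and L :: "nat set"
  assumes "c \<ge> 1"
    and "L \<subseteq> {1..j+k}" and "card L = j"
    and "j + k \<le> n"
    and "c * k + c * j + 1 \<ge> n" and "n \<ge> c + 1"
  shows "g c j k n L = 1"
proof -
  let ?S = "{w \<in> Sn n. squished c j k L w}"
  obtain w0 where w0: "w0 \<in> ?S" using squished_exists assms by blast
  have "Kclass c n w = Kclass c n w0" if w: "w \<in> ?S" for w
  proof -
    have "set w0 = set w" using w w0 by (simp add: permutations_of_set_def)
    moreover have "squished_config c 1 1 L ({1..j+k} - L) w" "squished_config c 1 1 L ({1..j+k} - L) w0"
      using w w0 assms by (blast intro: squished_config_if_squished)+
    ultimately have "equivclp (Kmove c 1 1) w w0"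
      using assms(1) by (intro equivclp_Kmove_if_squished_config) auto
    then show ?thesis using w by (simp add: Kclass_eq Kequiv_if_equivclp_Kmove)
  qed
  then have "Kclass c n ` ?S = {Kclass c n w0}" using w0 by blast
  then show ?thesis by (simp add: g_def)
qed

end
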